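(* Let $m\ge1$, $n\ge1$ and let $\Sigma_0,\Sigma_1,\dots,\Sigma_n\in\mathbb R^{m\times m}$ be such that the block-Toeplitz matrix $\mathbf T_n$, whose $(i,j)$ block ($i,j=0,\dots,n$) is $\Sigma_{i-j}$ if $i\ge j$ and $\Sigma_{j-i}^\top$ if $i<j$, satisfies $\mathbf T_n=\mathbf T_n^\top>0$. Then there exists $\bar N$ such that for every $N\ge\bar N$ the matrix $\mathbf T_n$ can be extended to an $N\times N$ block ($mN\times mN$) block-circulant, symmetric, positive definite matrix $\boldsymbol\Sigma_N$, i.e. one whose upper-left $(n+1)\times(n+1)$ block corner equals $\mathbf T_n$.
   Context: A matrix made of $N\times N$ blocks of size $m\times m$ is block-circulant if its $(i,j)$ block depends only on $(i-j)\bmod N$. *)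

theory Defs
  imports Complex_Main
begin

text \<open>Square real matrices of size d are represented as functions nat \<Rightarrow> nat \<Rightarrow> real,
  of which only the entries with indices below d are relevant.\<close>

definition sym_mat :: "nat \<Rightarrow> (nat \<Rightarrow> nat \<Rightarrow> real) \<Rightarrow> bool" where
  "sym_mat d A \<longleftrightarrow> (\<forall>i<d. \<forall>j<d. A i j = A j i)"

definition pos_def_mat :: "nat \<Rightarrow> (nat \<Rightarrow> nat \<Rightarrow> real) \<Rightarrow> bool" where
  "pos_def_mat d A \<longleftrightarrow>
     (\<forall>x::nat \<Rightarrow> real. (\<exists>i<d. x i \<noteq> 0) \<longrightarrow> (\<Sum>i<d. \<Sum>j<d. x i * A i j * x j) > 0)"

text \<open>Block-Toeplitz matrix T_n built from blocks Sigma 0, ..., Sigma n (each m x m,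
  Sigma k r c is the (r,c) entry of Sigma_k): block (i,j) is Sigma_(i-j) if i \<ge> j and
  the transpose of Sigma_(j-i) otherwise.\<close>

definition block_toeplitz :: "nat \<Rightarrow> (nat \<Rightarrow> nat \<Rightarrow> nat \<Rightarrow> real) \<Rightarrow> nat \<Rightarrow> nat \<Rightarrow> real" where
  "block_toeplitz m Sig p q =
     (let i = p div m; r = p mod m; j = q div m; c = q mod m in
      if j \<le> i then Sig (i - j) r c else Sig (j - i) c r)"

definition block_circulant :: "nat \<Rightarrow> nat \<Rightarrow> (nat \<Rightarrow> nat \<Rightarrow> real) \<Rightarrow> bool" where
  "block_circulant m N A \<longleftrightarrow>
     (\<forall>i<N. \<forall>j<N. \<forall>i'<N. \<forall>j'<N.
        (int i - int j) mod int N = (int i' - int j') mod int N \<longrightarrow>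
        (\<forall>r<m. \<forall>c<m. A (i*m + r) (j*m + c) = A (i'*m + r) (j'*m + c)))"

end

theory Submission
  imports Defs
begin

text \<open>Multiply the \<open>k\<close>-th block \<open>\<Sigma>\<^sub>k\<close> by \<open>W / (W - k)\<close>: for \<open>W\<close> large the block Toeplitz matrix
  stays positive definite, as positive definiteness is an open condition. Extend it one block at
  a time to a positive definite block Toeplitz matrix \<open>T\<close> with \<open>W\<close> block rows; each step is a
  positive definite completion of two overlapping principal submatrices, which always exists
  (by Schur complements). Finally average \<open>P\<^sub>s T P\<^sub>s\<^sup>T\<close> over the \<open>N\<close> cyclic block shifts
  \<open>P\<^sub>s\<close>: the average is block circulant, symmetric and positive definite, and for \<open>N \<ge> 2W\<close>
  its \<open>k\<close>-th block diagonal near the corner is \<open>(W - k) / W\<close> times that of \<open>T\<close>, which the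
  initial amplification cancels.\<close>

section \<open>Quadratic forms, Schur complements and positive definite completion\<close>

definition quad_form :: "nat set \<Rightarrow> (nat \<Rightarrow> nat \<Rightarrow> real) \<Rightarrow> (nat \<Rightarrow> real) \<Rightarrow> real" where
  "quad_form S M x = (\<Sum>u\<in>S. \<Sum>v\<in>S. x u * M u v * x v)"

definition pos_def_on :: "nat set \<Rightarrow> (nat \<Rightarrow> nat \<Rightarrow> real) \<Rightarrow> bool" where
  "pos_def_on S M \<longleftrightarrow> (\<forall>x. (\<exists>u\<in>S. x u \<noteq> 0) \<longrightarrow> 0 < quad_form S M x)"

definition symmetric_on :: "nat set \<Rightarrow> (nat \<Rightarrow> nat \<Rightarrow> real) \<Rightarrow> bool" where
  "symmetric_on S M \<longleftrightarrow> (\<forall>u\<in>S. \<forall>v\<in>S. M u v = M v u)"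

definition schur_compl :: "(nat \<Rightarrow> nat \<Rightarrow> real) \<Rightarrow> nat \<Rightarrow> nat \<Rightarrow> nat \<Rightarrow> real" where
  "schur_compl M j u v = M u v - M u j * M j v / M j j"

definition schur_lift :: "(nat \<Rightarrow> nat \<Rightarrow> real) \<Rightarrow> nat \<Rightarrow> (nat \<Rightarrow> nat \<Rightarrow> real) \<Rightarrow> nat \<Rightarrow> nat \<Rightarrow> real" where
  "schur_lift M j C u v = (if u = j \<or> v = j then M u v else C u v + M u j * M j v / M j j)"

lemma sym_mat_iff_symmetric_on: "sym_mat d A \<longleftrightarrow> symmetric_on {..<d} A"
  unfolding sym_mat_def symmetric_on_def by auto

lemma pos_def_mat_iff_pos_def_on: "pos_def_mat d A \<longleftrightarrow> pos_def_on {..<d} A"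
  unfolding pos_def_mat_def pos_def_on_def quad_form_def by auto

lemma quad_form_eq_0: "(\<And>u. u \<in> S \<Longrightarrow> x u = 0) \<Longrightarrow> quad_form S M x = 0"
  by (simp add: quad_form_def)

lemma quad_form_cong:
  "(\<And>u v. u \<in> S \<Longrightarrow> v \<in> S \<Longrightarrow> M u v = M' u v) \<Longrightarrow> (\<And>u. u \<in> S \<Longrightarrow> x u = x' u) \<Longrightarrow>
    quad_form S M x = quad_form S M' x'"
  unfolding quad_form_def by (intro sum.cong refl) auto

lemma pos_def_on_cong:
  "(\<And>u v. u \<in> S \<Longrightarrow> v \<in> S \<Longrightarrow> M u v = M' u v) \<Longrightarrow> pos_def_on S M \<longleftrightarrow> pos_def_on S M'"
  unfolding pos_def_on_def using quad_form_cong[of S M M'] by metis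

lemma symmetric_on_cong:
  "(\<And>u v. u \<in> S \<Longrightarrow> v \<in> S \<Longrightarrow> M u v = M' u v) \<Longrightarrow> symmetric_on S M \<longleftrightarrow> symmetric_on S M'"
  unfolding symmetric_on_def by auto

lemma pos_def_on_imp_nonneg: "pos_def_on S M \<Longrightarrow> 0 \<le> quad_form S M x"
  unfolding pos_def_on_def by (metis quad_form_eq_0 order_le_less)

lemma pos_def_on_diag_pos:
  assumes "finite S" "pos_def_on S M" "j \<in> S"
  shows "0 < M j j"
proof -
  have "0 < quad_form S M (\<lambda>u. if u = j then 1 else 0)"
    using assms unfolding pos_def_on_def by force
  also have "quad_form S M (\<lambda>u. if u = j then 1 else 0) = M j j"
    unfolding quad_form_def using assms
    by (simp add: of_bool_def[symmetric] Int_insert_left if_distrib sum.delta cong: if_cong)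
  finally show ?thesis .
qed

lemma quad_form_schur_compl:
  assumes "finite S" "j \<in> S" "symmetric_on S M" "M j j \<noteq> 0"
  shows "quad_form S M x =
    M j j * (x j + (\<Sum>u\<in>S-{j}. M j u * x u) / M j j)\<^sup>2 + quad_form (S-{j}) (schur_compl M j) x"
proof -
  define S0 where "S0 = S - {j}"
  define b where "b = (\<Sum>u\<in>S0. M j u * x u)"
  have S: "S = insert j S0" "j \<notin> S0" "finite S0" using assms(1,2) unfolding S0_def by auto
  have sym_j: "M u j = M j u" if "u \<in> S0" for u
    using assms(2,3) that unfolding symmetric_on_def S0_def by blast
  have row: "(\<Sum>v\<in>S0. x j * M j v * x v) = x j * b"
    unfolding b_def by (simp add: sum_distrib_left mult.assoc)
  have col: "(\<Sum>u\<in>S0. x u * M u j * x j) = x j * b"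
    unfolding b_def by (simp add: sum_distrib_left sym_j) (simp add: ac_simps)
  have expand: "quad_form S M x = x j * M j j * x j + (\<Sum>v\<in>S0. x j * M j v * x v)
      + ((\<Sum>u\<in>S0. x u * M u j * x j) + quad_form S0 M x)"
    unfolding quad_form_def S(1) by (simp add: sum.insert[OF S(3) S(2)] sum.distrib)
  have "(\<Sum>u\<in>S0. \<Sum>v\<in>S0. (x u * M u j) * (M j v * x v)) = b * b"
    unfolding b_def by (simp add: sum_product sym_j mult.commute cong: sum.cong)
  then have compl: "quad_form S0 (schur_compl M j) x = quad_form S0 M x - b * b / M j j"
    unfolding quad_form_def schur_compl_def
    by (simp add: algebra_simps diff_divide_distrib sum_subtractf flip: sum_divide_distrib)
  show ?thesis
    unfolding S0_def[symmetric] b_def[symmetric] expand row col compl using assms(4)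
    by (simp add: field_simps power2_eq_square)
qed

lemma pos_def_on_iff_schur_compl:
  assumes "finite S" "j \<in> S" "symmetric_on S M" "0 < M j j"
  shows "pos_def_on S M \<longleftrightarrow> pos_def_on (S-{j}) (schur_compl M j)"
proof
  assume pd: "pos_def_on S M"
  show "pos_def_on (S-{j}) (schur_compl M j)" unfolding pos_def_on_def
  proof (intro allI impI)
    fix x :: "nat \<Rightarrow> real" assume nz: "\<exists>u\<in>S-{j}. x u \<noteq> 0"
    \<comment> \<open>choose the j-th coordinate so that the square in the Schur identity vanishes\<close>
    define x' where "x' = x(j := - (\<Sum>u\<in>S-{j}. M j u * x u) / M j j)"
    have row: "(\<Sum>u\<in>S-{j}. M j u * x' u) = (\<Sum>u\<in>S-{j}. M j u * x u)"
      unfolding x'_def by (intro sum.cong) auto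
    have "\<exists>u\<in>S. x' u \<noteq> 0" using nz unfolding x'_def by auto
    then have "0 < quad_form S M x'" using pd unfolding pos_def_on_def by blast
    also have "quad_form S M x' = quad_form (S-{j}) (schur_compl M j) x'"
      using quad_form_schur_compl[OF assms(1-3), of x'] assms(4) row by (simp add: x'_def)
    also have "\<dots> = quad_form (S-{j}) (schur_compl M j) x"
      by (rule quad_form_cong) (auto simp: x'_def)
    finally show "0 < quad_form (S-{j}) (schur_compl M j) x" .
  qed
next
  assume pd: "pos_def_on (S-{j}) (schur_compl M j)"
  show "pos_def_on S M" unfolding pos_def_on_def
  proof (intro allI impI)
    fix x :: "nat \<Rightarrow> real" assume nz: "\<exists>u\<in>S. x u \<noteq> 0"
    have split: "quad_form S M x =
        M j j * (x j + (\<Sum>u\<in>S-{j}. M j u * x u) / M j j)\<^sup>2 + quad_form (S-{j}) (schur_compl M j) x"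
      using quad_form_schur_compl[OF assms(1-3)] assms(4) by simp
    show "0 < quad_form S M x"
    proof (cases "\<exists>u\<in>S-{j}. x u \<noteq> 0")
      case True
      then have "0 < quad_form (S-{j}) (schur_compl M j) x"
        using pd unfolding pos_def_on_def by blast
      moreover have "0 \<le> M j j * (x j + (\<Sum>u\<in>S-{j}. M j u * x u) / M j j)\<^sup>2"
        using assms(4) by simp
      ultimately show ?thesis using split by linarith
    next
      case False
      then have "x j \<noteq> 0" using nz by blast
      then show ?thesis using False split assms(4) quad_form_eq_0[of "S-{j}" x] by simp
    qed
  qed
qed

lemma symmetric_on_schur_compl:
  "symmetric_on S M \<Longrightarrow> j \<in> S \<Longrightarrow> symmetric_on (S - {j}) (schur_compl M j)"
  unfolding symmetric_on_def schur_compl_def by (metis DiffD1 mult.commute)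

text \<open>Positive definiteness is an open condition: by induction on the index set, peeling off
  one pivot at a time, since Schur complements depend continuously on the entries.\<close>

lemma eventually_pos_def_on:
  assumes "finite S" "\<And>t. symmetric_on S (A t)" "symmetric_on S B"
    "\<And>u v. ((\<lambda>t. A t u v) \<longlongrightarrow> B u v) F" "pos_def_on S B"
  shows "eventually (\<lambda>t. pos_def_on S (A t)) F"
  using assms
proof (induction S arbitrary: A B rule: finite_induct)
  case empty
  then show ?case by (simp add: pos_def_on_def)
next
  case (insert j S)
  have fin: "finite (insert j S)" and j: "j \<in> insert j S" and S: "insert j S - {j} = S"
    using insert.hyps by auto
  have B_jj: "0 < B j j" by (rule pos_def_on_diag_pos[OF fin insert.prems(4) j])
  have "eventually (\<lambda>t. pos_def_on S (schur_compl (A t) j)) F"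
  proof (rule insert.IH)
    show "symmetric_on S (schur_compl (A t) j)" for t
      using symmetric_on_schur_compl[OF insert.prems(1) j] S by simp
    show "symmetric_on S (schur_compl B j)"
      using symmetric_on_schur_compl[OF insert.prems(2) j] S by simp
    show "((\<lambda>t. schur_compl (A t) j u v) \<longlongrightarrow> schur_compl B j u v) F" for u v
      unfolding schur_compl_def using B_jj by (intro tendsto_intros insert.prems(3)) simp
    show "pos_def_on S (schur_compl B j)"
      using pos_def_on_iff_schur_compl[OF fin j insert.prems(2) B_jj] insert.prems(4) S by simp
  qed
  moreover have "eventually (\<lambda>t. 0 < A t j j) F"
    using order_tendstoD(1)[OF insert.prems(3) B_jj] .
  ultimately show ?case
  proof eventually_elim
    case (elim t)
    then show ?case
      using pos_def_on_iff_schur_compl[OF fin j insert.prems(1)] S by simp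
  qed
qed

lemma quad_form_Un_block_diag:
  assumes "finite I" "finite K" "I \<inter> K = {}"
    and "\<And>u v. u \<in> I \<Longrightarrow> v \<in> K \<Longrightarrow> M u v = 0 \<and> M v u = 0"
  shows "quad_form (I \<union> K) M x = quad_form I M x + quad_form K M x"
proof -
  have cross: "(\<Sum>u\<in>A. \<Sum>v\<in>B. x u * M u v * x v) = 0"
    if "A = I \<and> B = K \<or> A = K \<and> B = I" for A B
    using that assms(4) by (auto intro!: sum.neutral)
  show ?thesis
    unfolding quad_form_def using assms(1-3)
    by (simp add: sum.union_disjoint sum.distrib cross)
qed

lemma pos_def_on_Un_block_diag:
  assumes "finite I" "finite K" "I \<inter> K = {}"
    and "\<And>u v. u \<in> I \<Longrightarrow> v \<in> K \<Longrightarrow> M u v = 0 \<and> M v u = 0"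
    and "pos_def_on I M" "pos_def_on K M"
  shows "pos_def_on (I \<union> K) M"
  unfolding pos_def_on_def
proof (intro allI impI)
  fix x :: "nat \<Rightarrow> real" assume "\<exists>u\<in>I \<union> K. x u \<noteq> 0"
  then have "0 < quad_form I M x \<or> 0 < quad_form K M x"
    using assms(5,6) unfolding pos_def_on_def by blast
  moreover have "quad_form (I \<union> K) M x = quad_form I M x + quad_form K M x"
    using assms(1-4) by (rule quad_form_Un_block_diag)
  ultimately show "0 < quad_form (I \<union> K) M x"
    using pos_def_on_imp_nonneg[OF assms(5), of x]
      pos_def_on_imp_nonneg[OF assms(6), of x] by linarith
qed

lemma schur_compl_schur_lift: "u \<noteq> j \<Longrightarrow> v \<noteq> j \<Longrightarrow> schur_compl (schur_lift M j C) j u v = C u v"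
  unfolding schur_compl_def schur_lift_def by simp

lemma schur_lift_eq:
  assumes "\<And>u v. u \<in> A \<Longrightarrow> v \<in> A \<Longrightarrow> C u v = schur_compl M j u v" "u \<in> insert j A" "v \<in> insert j A"
  shows "schur_lift M j C u v = M u v"
  using assms unfolding schur_lift_def schur_compl_def by auto

lemma symmetric_on_schur_lift:
  assumes "\<And>u. u \<in> A \<Longrightarrow> M u j = M j u" "symmetric_on A C"
  shows "symmetric_on (insert j A) (schur_lift M j C)"
  using assms unfolding symmetric_on_def schur_lift_def by (auto simp: mult.commute)

lemma pos_def_on_schur_lift:
  assumes "finite S" "j \<in> S" "\<And>u. u \<in> S \<Longrightarrow> M u j = M j u" "0 < M j j"
    and "symmetric_on (S - {j}) C" "pos_def_on (S - {j}) C"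
  shows "pos_def_on S (schur_lift M j C)"
proof -
  have sym: "symmetric_on S (schur_lift M j C)"
    using symmetric_on_schur_lift[of "S - {j}" M j C] assms(2,3,5) by (simp add: insert_absorb)
  have "pos_def_on (S - {j}) (schur_compl (schur_lift M j C) j)"
    using assms(6) by (subst pos_def_on_cong[where M' = C]) (auto simp: schur_compl_schur_lift)
  then show ?thesis
    using pos_def_on_iff_schur_compl[OF assms(1,2) sym] assms(4) by (simp add: schur_lift_def)
qed

lemma pos_def_on_disjoint_completion:
  assumes "finite I" "finite K" "I \<inter> K = {}"
    and "symmetric_on I M" "symmetric_on K M" "pos_def_on I M" "pos_def_on K M"
  shows "\<exists>M'. symmetric_on (I \<union> K) M' \<and> pos_def_on (I \<union> K) M' \<and>
    (\<forall>u\<in>I. \<forall>v\<in>I. M' u v = M u v) \<and> (\<forall>u\<in>K. \<forall>v\<in>K. M' u v = M u v)"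
proof -
  define M' where "M' u v = (if u \<in> I \<and> v \<in> K \<or> u \<in> K \<and> v \<in> I then 0 else M u v)" for u v
  have agree: "M' u v = M u v" if "u \<in> I \<and> v \<in> I \<or> u \<in> K \<and> v \<in> K" for u v
    using that assms(3) unfolding M'_def by auto
  have "symmetric_on (I \<union> K) M'"
    unfolding symmetric_on_def
  proof (intro ballI)
    fix u v assume "u \<in> I \<union> K" "v \<in> I \<union> K"
    then show "M' u v = M' v u"
      using assms(4,5) agree[of u v] agree[of v u] unfolding symmetric_on_def M'_def
      by (cases "u \<in> I \<and> v \<in> K \<or> u \<in> K \<and> v \<in> I") auto
  qed
  moreover have "pos_def_on (I \<union> K) M'"
  proof (rule pos_def_on_Un_block_diag[OF assms(1-3)])
    show "pos_def_on I M'" "pos_def_on K M'"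
      using assms(6,7) pos_def_on_cong[of I M' M] pos_def_on_cong[of K M' M] agree by auto
  qed (auto simp: M'_def)
  ultimately show ?thesis using agree by auto
qed

text \<open>Two positive definite principal blocks on \<open>I \<union> J\<close> and \<open>J \<union> K\<close> overlapping in \<open>J\<close>
  admit a common positive definite completion: take Schur complements at the points of \<open>J\<close>
  one by one until the blocks are disjoint, fill in zeros, and lift back.\<close>

lemma pos_def_on_overlap_completion:
  assumes "finite J" "finite I" "finite K" "I \<inter> K = {}"
  shows "I \<inter> J = {} \<Longrightarrow> J \<inter> K = {} \<Longrightarrow> symmetric_on (I \<union> J) M \<Longrightarrow> symmetric_on (J \<union> K) M \<Longrightarrow>
    pos_def_on (I \<union> J) M \<Longrightarrow> pos_def_on (J \<union> K) M \<Longrightarrow>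
    \<exists>M'. symmetric_on (I \<union> J \<union> K) M' \<and> pos_def_on (I \<union> J \<union> K) M' \<and>
      (\<forall>u\<in>I \<union> J. \<forall>v\<in>I \<union> J. M' u v = M u v) \<and> (\<forall>u\<in>J \<union> K. \<forall>v\<in>J \<union> K. M' u v = M u v)"
  using assms(1)
proof (induction J arbitrary: M rule: finite_induct)
  case empty
  then show ?case using pos_def_on_disjoint_completion[OF assms(2-4)] by simp
next
  case (insert j J)
  let ?L = "I \<union> insert j J" and ?R = "insert j J \<union> K"
  have j: "j \<in> ?L" "j \<in> ?R" "j \<notin> I \<union> J \<union> K" using insert.hyps insert.prems(1,2) by auto
  have L: "?L - {j} = I \<union> J" and R: "?R - {j} = J \<union> K" using j(3) by auto
  have fin: "finite ?L" "finite ?R" using insert.hyps assms(2,3) by auto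
  have M_jj: "0 < M j j" using pos_def_on_diag_pos[OF fin(1) insert.prems(5) j(1)] .
  obtain C where C: "symmetric_on (I \<union> J \<union> K) C" "pos_def_on (I \<union> J \<union> K) C"
      "\<forall>u\<in>I \<union> J. \<forall>v\<in>I \<union> J. C u v = schur_compl M j u v"
      "\<forall>u\<in>J \<union> K. \<forall>v\<in>J \<union> K. C u v = schur_compl M j u v"
  proof -
    have "symmetric_on (I \<union> J) (schur_compl M j)" "symmetric_on (J \<union> K) (schur_compl M j)"
      using symmetric_on_schur_compl[OF insert.prems(3) j(1)] symmetric_on_schur_compl[OF insert.prems(4) j(2)]
      unfolding L R by auto
    moreover have "pos_def_on (I \<union> J) (schur_compl M j)" "pos_def_on (J \<union> K) (schur_compl M j)"
      using pos_def_on_iff_schur_compl[OF fin(1) j(1) insert.prems(3) M_jj]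
        pos_def_on_iff_schur_compl[OF fin(2) j(2) insert.prems(4) M_jj] insert.prems(5,6)
      unfolding L R by auto
    ultimately show ?thesis
      using that insert.IH[of "schur_compl M j"] insert.prems(1,2) by auto
  qed
  have row_sym: "M u j = M j u" if "u \<in> insert j (I \<union> J \<union> K)" for u
    using that insert.prems(3,4) j(1,2) unfolding symmetric_on_def by blast
  have "insert j (I \<union> J \<union> K) = I \<union> insert j J \<union> K" by auto
  moreover have "pos_def_on (insert j (I \<union> J \<union> K)) (schur_lift M j C)"
  proof (rule pos_def_on_schur_lift)
    have "insert j (I \<union> J \<union> K) - {j} = I \<union> J \<union> K" using j(3) by auto
    then show "symmetric_on (insert j (I \<union> J \<union> K) - {j}) C"
      "pos_def_on (insert j (I \<union> J \<union> K) - {j}) C" using C(1,2) by simp_all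
    show "M u j = M j u" if "u \<in> insert j (I \<union> J \<union> K)" for u
      using row_sym[OF that] .
  qed (use fin M_jj in auto)
  moreover have "symmetric_on (insert j (I \<union> J \<union> K)) (schur_lift M j C)"
    using symmetric_on_schur_lift[OF _ C(1)] row_sym by simp
  moreover have "\<forall>u\<in>?L. \<forall>v\<in>?L. schur_lift M j C u v = M u v"
    using schur_lift_eq[of "I \<union> J" C M j] C(3) by auto
  moreover have "\<forall>u\<in>?R. \<forall>v\<in>?R. schur_lift M j C u v = M u v"
    using schur_lift_eq[of "J \<union> K" C M j] C(4) by auto
  ultimately show ?case by (intro exI[of _ "schur_lift M j C"]) simp
qed

section \<open>Extending positive definite block Toeplitz matrices\<close>

lemma block_toeplitz_block:
  "r < m \<Longrightarrow> c < m \<Longrightarrow>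
    block_toeplitz m R (i * m + r) (j * m + c) = (if j \<le> i then R (i - j) r c else R (j - i) c r)"
  unfolding block_toeplitz_def Let_def by simp

lemma block_toeplitz_block_diff_eq:
  assumes "r < m" "c < m" "int \<alpha> - int \<beta> = int i - int j"
  shows "block_toeplitz m R (\<alpha> * m + r) (\<beta> * m + c) = block_toeplitz m R (i * m + r) (j * m + c)"
proof -
  have "\<alpha> - \<beta> = i - j" "\<beta> - \<alpha> = j - i" "\<beta> \<le> \<alpha> \<longleftrightarrow> j \<le> i" using assms(3) by auto
  then show ?thesis using assms(1,2) by (simp add: block_toeplitz_block)
qed

lemma block_toeplitz_shift: "m \<ge> 1 \<Longrightarrow> block_toeplitz m R (p + m) (q + m) = block_toeplitz m R p q"
  unfolding block_toeplitz_def Let_def by simp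

lemma block_toeplitz_cong:
  "(\<And>k. k \<le> L \<Longrightarrow> R' k = R k) \<Longrightarrow> p div m - q div m \<le> L \<Longrightarrow> q div m - p div m \<le> L \<Longrightarrow>
    block_toeplitz m R' p q = block_toeplitz m R p q"
  unfolding block_toeplitz_def Let_def by auto

lemma block_index_less_iff:
  fixes i r m k :: nat
  assumes "r < m"
  shows "i * m + r < m * k \<longleftrightarrow> i < k"
proof
  assume "i * m + r < m * k"
  then have "i * m < k * m" by (metis add_lessD1 mult.commute)
  then show "i < k" using mult_less_cancel2 by blast
next
  assume "i < k"
  then have "Suc i * m \<le> k * m" by (intro mult_le_mono1) simp
  then show "i * m + r < m * k" using assms by (simp add: mult.commute)
qed

lemma block_index_ge_iff: "r < m \<Longrightarrow> m \<le> i * m + r \<longleftrightarrow> 1 \<le> (i::nat)"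
  using block_index_less_iff[of r m i 1] by auto

lemma block_index_eq_iff:
  fixes i j r c m :: nat
  assumes "r < m" "c < m"
  shows "i * m + r = j * m + c \<longleftrightarrow> i = j \<and> r = c"
proof
  assume eq: "i * m + r = j * m + c"
  then have "(i * m + r) mod m = (j * m + c) mod m" by simp
  then have "r = c" using assms by simp
  with eq show "i = j \<and> r = c" using assms by simp
qed simp

lemma block_decompose:
  fixes m p k :: nat
  assumes "m \<ge> 1" "p < m * k"
  obtains i r where "p = i * m + r" "i < k" "r < m"
proof
  show "p = p div m * m + p mod m" by simp
  show "p div m < k" using assms by (simp add: div_less_iff_less_mult mult.commute)
  show "p mod m < m" using assms(1) by simp
qed

lemma quad_form_shift:
  "quad_form {k..<k+d} M x = quad_form {..<d} (\<lambda>p q. M (p + k) (q + k)) (\<lambda>u. x (u + k))"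
proof -
  have shift: "sum f {k..<k+d} = (\<Sum>u<d. f (u + k))" for f :: "nat \<Rightarrow> real"
    using sum.shift_bounds_nat_ivl[of f 0 k d] by (simp add: atLeast0LessThan add.commute)
  show ?thesis unfolding quad_form_def shift ..
qed

lemma pos_def_on_shift:
  assumes "pos_def_on {..<d} M" "\<And>p q. M (p + k) (q + k) = M p q"
  shows "pos_def_on {k..<k+d} M"
  unfolding pos_def_on_def
proof (intro allI impI)
  fix x :: "nat \<Rightarrow> real" assume "\<exists>u\<in>{k..<k+d}. x u \<noteq> 0"
  then have "\<exists>w\<in>{..<d}. x (w + k) \<noteq> 0" by (metis atLeastLessThan_iff add.commute
      le_add_diff_inverse lessThan_iff nat_add_left_cancel_less)
  then show "0 < quad_form {k..<k+d} M x"
    using assms unfolding pos_def_on_def quad_form_shift by simp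
qed

lemma symmetric_on_shift:
  assumes "symmetric_on {..<d} M" "\<And>p q. M (p + k) (q + k) = M p q"
  shows "symmetric_on {k..<k+d} M"
  unfolding symmetric_on_def
proof (intro ballI)
  fix u v assume "u \<in> {k..<k+d}" "v \<in> {k..<k+d}"
  then show "M u v = M v u"
    using assms(1) assms(2)[of "u - k" "v - k"] assms(2)[of "v - k" "u - k"]
    unfolding symmetric_on_def by auto
qed

lemma block_toeplitz_corner_extension:
  assumes m: "m \<ge> 1" and sym: "symmetric_on {..<m*(L+2)} M"
    and lead: "\<And>u v. u < m*(L+1) \<Longrightarrow> v < m*(L+1) \<Longrightarrow> M u v = block_toeplitz m R u v"
    and trail: "\<And>u v. u \<in> {m..<m*(L+2)} \<Longrightarrow> v \<in> {m..<m*(L+2)} \<Longrightarrow> M u v = block_toeplitz m R u v"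
    and pq: "p < m*(L+2)" "q < m*(L+2)"
  shows "block_toeplitz m (\<lambda>k r c. if k \<le> L then R k r c else M (m*(L+1) + r) c) p q = M p q"
proof -
  define R' where "R' k r c = (if k \<le> L then R k r c else M (m*(L+1) + r) c)" for k r c
  obtain i r where p: "p = i * m + r" "i < L + 2" "r < m" using block_decompose[OF m pq(1)] .
  obtain j c where q: "q = j * m + c" "j < L + 2" "c < m" using block_decompose[OF m pq(2)] .
  have block: "block_toeplitz m Q p q = (if j \<le> i then Q (i - j) r c else Q (j - i) c r)" for Q
    unfolding p(1) q(1) by (rule block_toeplitz_block[OF p(3) q(3)])
  consider "i \<le> L" "j \<le> L" | "1 \<le> i" "1 \<le> j" | "i = L + 1" "j = 0" | "i = 0" "j = L + 1"
    using p(2) q(2) by linarith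
  then have "block_toeplitz m R' p q = M p q"
  proof cases
    case 1
    then have "M p q = block_toeplitz m R p q"
      using lead block_index_less_iff[OF p(3), of i "L+1"] block_index_less_iff[OF q(3), of j "L+1"]
      unfolding p(1) q(1) by simp
    moreover have "i - j \<le> L" "j - i \<le> L" using 1 by auto
    ultimately show ?thesis unfolding block R'_def by simp
  next
    case 2
    then have "M p q = block_toeplitz m R p q"
      using trail pq block_index_ge_iff[OF p(3), of i] block_index_ge_iff[OF q(3), of j]
      unfolding p(1) q(1) by simp
    moreover have "i - j \<le> L" "j - i \<le> L" using 2 p(2) q(2) by auto
    ultimately show ?thesis unfolding block R'_def by simp
  next
    case 3
    then have "block_toeplitz m R' p q = R' (L + 1) r c" unfolding block by simp
    also have "\<dots> = M p q" using 3 unfolding R'_def p(1) q(1) by (simp add: algebra_simps)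
    finally show ?thesis .
  next
    case 4
    then have "block_toeplitz m R' p q = R' (L + 1) c r" unfolding block by simp
    also have "\<dots> = M q p" using 4 unfolding R'_def p(1) q(1) by (simp add: algebra_simps)
    also have "\<dots> = M p q" using sym pq unfolding symmetric_on_def by simp
    finally show ?thesis .
  qed
  then show ?thesis unfolding R'_def .
qed

text \<open>The leading and the trailing \<open>m(L+1) \<times> m(L+1)\<close> corners of the sought matrix of size
  \<open>m(L+2)\<close> are both copies of the given block Toeplitz matrix; a positive definite completion of
  these two overlapping corners is again block Toeplitz, its only new block being the corner one.\<close>

lemma block_toeplitz_extend_step:
  assumes m: "m \<ge> 1"
    and sym: "symmetric_on {..<m*(L+1)} (block_toeplitz m R)"
    and pd: "pos_def_on {..<m*(L+1)} (block_toeplitz m R)"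
  shows "\<exists>R'. (\<forall>k\<le>L. R' k = R k) \<and> symmetric_on {..<m*(L+2)} (block_toeplitz m R') \<and>
    pos_def_on {..<m*(L+2)} (block_toeplitz m R')"
proof -
  let ?T = "block_toeplitz m R"
  define I where "I = {..<m}"
  define J where "J = {m..<m*(L+1)}"
  define K where "K = {m*(L+1)..<m*(L+2)}"
  have IJ: "I \<union> J = {..<m*(L+1)}" and JK: "J \<union> K = {m..<m*(L+2)}"
    and IJK: "I \<union> J \<union> K = {..<m*(L+2)}"
    unfolding I_def J_def K_def using m by (auto simp: algebra_simps)
  have "{m..<m*(L+2)} = {m..<m+m*(L+1)}" by (simp add: algebra_simps)
  then have "symmetric_on (J \<union> K) ?T" "pos_def_on (J \<union> K) ?T"
    unfolding JK using symmetric_on_shift[OF sym block_toeplitz_shift[OF m]]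
      pos_def_on_shift[OF pd block_toeplitz_shift[OF m]] by auto
  moreover have "symmetric_on (I \<union> J) ?T" "pos_def_on (I \<union> J) ?T" unfolding IJ using sym pd by auto
  moreover have "finite J" "finite I" "finite K" "I \<inter> K = {}" "I \<inter> J = {}" "J \<inter> K = {}"
    unfolding I_def J_def K_def using m by (auto simp: algebra_simps)
  ultimately obtain M where M: "symmetric_on (I \<union> J \<union> K) M" "pos_def_on (I \<union> J \<union> K) M"
      "\<forall>u\<in>I \<union> J. \<forall>v\<in>I \<union> J. M u v = ?T u v" "\<forall>u\<in>J \<union> K. \<forall>v\<in>J \<union> K. M u v = ?T u v"
    using pos_def_on_overlap_completion[of J I K ?T] by blast
  define R' where "R' k r c = (if k \<le> L then R k r c else M (m*(L+1) + r) c)" for k r c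
  have agree: "block_toeplitz m R' p q = M p q" if "p < m*(L+2)" "q < m*(L+2)" for p q
    unfolding R'_def using M(1)[unfolded IJK] M(3)[unfolded IJ] M(4)[unfolded JK] that
    by (intro block_toeplitz_corner_extension[OF m]) auto
  have "symmetric_on {..<m*(L+2)} (block_toeplitz m R') \<longleftrightarrow> symmetric_on {..<m*(L+2)} M"
    by (intro symmetric_on_cong) (simp add: agree)
  moreover have "pos_def_on {..<m*(L+2)} (block_toeplitz m R') \<longleftrightarrow> pos_def_on {..<m*(L+2)} M"
    by (intro pos_def_on_cong) (simp add: agree)
  moreover have "\<forall>k\<le>L. R' k = R k" by (simp add: fun_eq_iff R'_def)
  ultimately show ?thesis using M(1,2) unfolding IJK by blast
qed

lemma block_toeplitz_extend:
  assumes "m \<ge> 1"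
    and "symmetric_on {..<m*(n+1)} (block_toeplitz m R)" "pos_def_on {..<m*(n+1)} (block_toeplitz m R)"
  shows "\<exists>R'. (\<forall>k\<le>n. R' k = R k) \<and> symmetric_on {..<m*(n+1+d)} (block_toeplitz m R') \<and>
    pos_def_on {..<m*(n+1+d)} (block_toeplitz m R')"
proof (induction d)
  case 0
  then show ?case using assms(2,3) by auto
next
  case (Suc d)
  then obtain R1 where R1: "\<forall>k\<le>n. R1 k = R k"
    "symmetric_on {..<m*(n+d+1)} (block_toeplitz m R1)" "pos_def_on {..<m*(n+d+1)} (block_toeplitz m R1)"
    by (auto simp: ac_simps)
  obtain R2 where R2: "\<forall>k\<le>n+d. R2 k = R1 k"
    "symmetric_on {..<m*(n+d+2)} (block_toeplitz m R2)" "pos_def_on {..<m*(n+d+2)} (block_toeplitz m R2)"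
    using block_toeplitz_extend_step[OF assms(1) R1(2,3)] by blast
  have "\<forall>k\<le>n. R2 k = R k" using R1(1) R2(1) by auto
  moreover have "n + 1 + Suc d = n + d + 2" by simp
  ultimately show ?case using R2 by metis
qed

section \<open>Averaging over cyclic block shifts\<close>

lemma sum_lessThan_mult_blocks:
  fixes f :: "nat \<Rightarrow> 'a::comm_monoid_add"
  shows "(\<Sum>a<m * W. f a) = (\<Sum>\<alpha><W. \<Sum>\<rho><m. f (\<alpha> * m + \<rho>))"
proof -
  have "(\<Sum>a<m * W. f a) = (\<Sum>\<alpha><W. sum f {\<alpha> * m..<\<alpha> * m + m})"
    using sum.nat_group[of f m W] by (simp add: mult.commute)
  also have "\<dots> = (\<Sum>\<alpha><W. \<Sum>\<rho><m. f (\<alpha> * m + \<rho>))"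
  proof -
    have "sum f {k..<k + m} = (\<Sum>\<rho><m. f (k + \<rho>))" for k
      using sum.shift_bounds_nat_ivl[of f 0 k m] by (simp add: atLeast0LessThan add.commute)
    then show ?thesis by simp
  qed
  finally show ?thesis .
qed

lemma mod_add_eq_iff_int:
  fixes N s a i :: nat
  assumes "s < N" "i < N"
  shows "(s + a) mod N = i \<longleftrightarrow> int s = (int i - int a) mod int N"
proof -
  have "(s + a) mod N = i \<longleftrightarrow> int ((s + a) mod N) = int i" by (rule of_nat_eq_iff[symmetric])
  also have "\<dots> \<longleftrightarrow> (int s + int a) mod int N = int i mod int N"
    using assms(2) by (simp add: zmod_int)
  also have "\<dots> \<longleftrightarrow> int s mod int N = (int i - int a) mod int N"
    by (simp add: mod_eq_dvd_iff algebra_simps)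
  finally show ?thesis using assms(1) by simp
qed

lemma sum_shift_pair_eq:
  fixes N i j a b :: nat
  assumes "i < N" "j < N"
  shows "(\<Sum>s<N. if (s + a) mod N = i \<and> (s + b) mod N = j then X else 0) =
    (if (int a - int b) mod int N = (int i - int j) mod int N then X else (0::real))"
proof -
  define s0 where "s0 = nat ((int i - int a) mod int N)"
  have s0: "s0 < N" "int s0 = (int i - int a) mod int N"
    unfolding s0_def using assms(1) by (auto simp: nat_less_iff)
  have "(s0 + b) mod N = j \<longleftrightarrow> (int i - int a) mod int N = (int j - int b) mod int N"
    using mod_add_eq_iff_int[OF s0(1) assms(2)] s0(2) by simp
  also have "\<dots> \<longleftrightarrow> (int a - int b) mod int N = (int i - int j) mod int N"
    by (simp add: mod_eq_dvd_iff dvd_diff_commute algebra_simps)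
  finally have "(s0 + b) mod N = j \<longleftrightarrow> (int a - int b) mod int N = (int i - int j) mod int N" .
  moreover have "(s + a) mod N = i \<longleftrightarrow> s = s0" if "s < N" for s
    using mod_add_eq_iff_int[OF that assms(1), where a = a] unfolding s0(2)[symmetric] by simp
  ultimately have "(\<Sum>s<N. if (s + a) mod N = i \<and> (s + b) mod N = j then X else 0) =
      (\<Sum>s<N. if s = s0 then (if (int a - int b) mod int N = (int i - int j) mod int N then X else 0) else 0)"
    by (intro sum.cong) auto
  then show ?thesis using s0(1) by simp
qed

text \<open>\<open>cyclic_embed m N s\<close> sends the index of a matrix with \<open>W\<close> block rows of size \<open>m\<close> to the
  index of an \<open>N \<times> N\<close> block matrix, moving block row \<open>\<alpha>\<close> to \<open>(s + \<alpha>) mod N\<close>.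
  \<open>circulant_average m N W T\<close> is \<open>(1/W) \<Sum>\<^sub>s P\<^sub>s T P\<^sub>s\<^sup>T\<close> for the corresponding
  \<open>mN \<times> mW\<close> selection matrices \<open>P\<^sub>s\<close>.\<close>

definition cyclic_embed :: "nat \<Rightarrow> nat \<Rightarrow> nat \<Rightarrow> nat \<Rightarrow> nat" where
  "cyclic_embed m N s a = ((s + a div m) mod N) * m + a mod m"

definition circulant_average :: "nat \<Rightarrow> nat \<Rightarrow> nat \<Rightarrow> (nat \<Rightarrow> nat \<Rightarrow> real) \<Rightarrow> nat \<Rightarrow> nat \<Rightarrow> real" where
  "circulant_average m N W T p q = (1 / real W) *
     (\<Sum>s<N. \<Sum>a<m*W. \<Sum>b<m*W. if cyclic_embed m N s a = p \<and> cyclic_embed m N s b = q then T a b else 0)"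

lemma cyclic_embed_less: "m \<ge> 1 \<Longrightarrow> N \<ge> 1 \<Longrightarrow> cyclic_embed m N s a < m * N"
  unfolding cyclic_embed_def
  using block_index_less_iff[of "a mod m" m "(s + a div m) mod N" N] by simp

lemma cyclic_embed_block: "\<rho> < m \<Longrightarrow> cyclic_embed m N s (\<alpha> * m + \<rho>) = ((s + \<alpha>) mod N) * m + \<rho>"
  unfolding cyclic_embed_def by simp

lemma sum_cyclic_embed_eq:
  fixes g :: "nat \<Rightarrow> real"
  assumes "\<rho> < m"
  shows "(\<Sum>a<m*W. if cyclic_embed m N s a = i * m + \<rho> then g a else 0) =
    (\<Sum>\<alpha><W. if (s + \<alpha>) mod N = i then g (\<alpha> * m + \<rho>) else 0)"
proof -
  have "(\<Sum>\<rho>'<m. if cyclic_embed m N s (\<alpha> * m + \<rho>') = i * m + \<rho> then g (\<alpha> * m + \<rho>') else 0) =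
      (\<Sum>\<rho>'<m. if \<rho>' = \<rho> then (if (s + \<alpha>) mod N = i then g (\<alpha> * m + \<rho>) else 0) else 0)" for \<alpha>
    using assms by (intro sum.cong refl) (auto simp: cyclic_embed_block block_index_eq_iff)
  then show ?thesis using assms by (simp add: sum_lessThan_mult_blocks)
qed

lemma quad_form_circulant_average:
  assumes "m \<ge> 1" "N \<ge> 1"
  shows "quad_form {..<m*N} (circulant_average m N W T) x =
    (1 / real W) * (\<Sum>s<N. quad_form {..<m*W} T (\<lambda>a. x (cyclic_embed m N s a)))"
proof -
  let ?e = "cyclic_embed m N"
  let ?I = "\<lambda>p q s a b. if ?e s a = p \<and> ?e s b = q then T a b else 0"
  have "quad_form {..<m*N} (circulant_average m N W T) x = (1 / real W) *
      (\<Sum>p<m*N. \<Sum>q<m*N. \<Sum>s<N. \<Sum>a<m*W. \<Sum>b<m*W. x p * ?I p q s a b * x q)"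
    unfolding quad_form_def circulant_average_def by (simp add: sum_distrib_left sum_distrib_right mult_ac)
  also have "(\<Sum>p<m*N. \<Sum>q<m*N. \<Sum>s<N. \<Sum>a<m*W. \<Sum>b<m*W. x p * ?I p q s a b * x q) =
      (\<Sum>s<N. \<Sum>a<m*W. \<Sum>b<m*W. \<Sum>p<m*N. \<Sum>q<m*N. x p * ?I p q s a b * x q)"
    by (simp only: sum.swap[of _ "{..<m*N}" "{..<N}"] sum.swap[of _ "{..<m*N}" "{..<m*W}"])
  also have "\<dots> = (\<Sum>s<N. \<Sum>a<m*W. \<Sum>b<m*W. x (?e s a) * T a b * x (?e s b))"
  proof (intro sum.cong refl)
    fix s a b
    have "x p * ?I p q s a b * x q =
        (if p = ?e s a then if q = ?e s b then x (?e s a) * T a b * x (?e s b) else 0 else 0)" for p q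
      by auto
    moreover have "(\<Sum>q<m*N. if p = ?e s a then if q = ?e s b then x (?e s a) * T a b * x (?e s b) else 0
        else 0) = (if p = ?e s a then x (?e s a) * T a b * x (?e s b) else 0)" for p
      using cyclic_embed_less[OF assms, of s b] by (cases "p = ?e s a") simp_all
    ultimately show "(\<Sum>p<m*N. \<Sum>q<m*N. x p * ?I p q s a b * x q) = x (?e s a) * T a b * x (?e s b)"
      using cyclic_embed_less[OF assms, of s a] by simp
  qed
  finally show ?thesis unfolding quad_form_def .
qed

text \<open>Every coordinate of \<open>x\<close> is hit by some shifted copy of \<open>T\<close>, which then contributes a
  positive term.\<close>

lemma pos_def_on_circulant_average:
  assumes m: "m \<ge> 1" and N: "N \<ge> 1" and W: "W \<ge> 1" and pd: "pos_def_on {..<m*W} T"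
  shows "pos_def_on {..<m*N} (circulant_average m N W T)"
  unfolding pos_def_on_def
proof (intro allI impI)
  fix x :: "nat \<Rightarrow> real" assume "\<exists>u\<in>{..<m*N}. x u \<noteq> 0"
  then obtain p where p: "p < m*N" "x p \<noteq> 0" by auto
  obtain i r where ir: "p = i * m + r" "i < N" "r < m" using block_decompose[OF m p(1)] .
  have "cyclic_embed m N i r = p" unfolding cyclic_embed_def ir(1) using ir(2,3) by simp
  moreover have "r < m * W" using ir(3) W by (simp add: less_le_trans[of r m "m * W"])
  ultimately have "0 < quad_form {..<m*W} T (\<lambda>a. x (cyclic_embed m N i a))"
    using pd p(2) unfolding pos_def_on_def by auto
  then have "0 < (\<Sum>s<N. quad_form {..<m*W} T (\<lambda>a. x (cyclic_embed m N s a)))"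
    using ir(2) pos_def_on_imp_nonneg[OF pd] by (intro sum_pos2[of _ i]) auto
  then show "0 < quad_form {..<m*N} (circulant_average m N W T) x"
    unfolding quad_form_circulant_average[OF m N] using W by simp
qed

lemma symmetric_on_circulant_average:
  assumes "symmetric_on {..<m*W} T"
  shows "symmetric_on A (circulant_average m N W T)"
proof -
  have "(\<Sum>a<m*W. \<Sum>b<m*W. if cyclic_embed m N s a = q \<and> cyclic_embed m N s b = p then T a b else 0) =
      (\<Sum>a<m*W. \<Sum>b<m*W. if cyclic_embed m N s a = p \<and> cyclic_embed m N s b = q then T a b else 0)"
    for s p q
  proof -
    have "(\<Sum>a<m*W. \<Sum>b<m*W. if cyclic_embed m N s a = q \<and> cyclic_embed m N s b = p then T a b else 0) =
        (\<Sum>b<m*W. \<Sum>a<m*W. if cyclic_embed m N s a = q \<and> cyclic_embed m N s b = p then T a b else 0)"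
      by (rule sum.swap)
    also have "\<dots> = (\<Sum>b<m*W. \<Sum>a<m*W.
        if cyclic_embed m N s b = p \<and> cyclic_embed m N s a = q then T b a else 0)"
    proof (intro sum.cong refl)
      fix a b assume "a \<in> {..<m*W}" "b \<in> {..<m*W}"
      then have "T a b = T b a" using assms unfolding symmetric_on_def by blast
      then show "(if cyclic_embed m N s a = q \<and> cyclic_embed m N s b = p then T a b else 0) =
          (if cyclic_embed m N s b = p \<and> cyclic_embed m N s a = q then T b a else 0)" by auto
    qed
    finally show ?thesis .
  qed
  then show ?thesis unfolding symmetric_on_def circulant_average_def by simp
qed

lemma sum_cyclic_embed_pair_eq:
  fixes T :: "nat \<Rightarrow> nat \<Rightarrow> real"
  assumes "\<rho> < m" "\<gamma> < m"
  shows "(\<Sum>a<m*W. \<Sum>b<m*W. if cyclic_embed m N s a = i * m + \<rho> \<and> cyclic_embed m N s b = j * m + \<gamma>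
      then T a b else 0) =
    (\<Sum>\<alpha><W. \<Sum>\<beta><W. if (s + \<alpha>) mod N = i \<and> (s + \<beta>) mod N = j
      then T (\<alpha> * m + \<rho>) (\<beta> * m + \<gamma>) else 0)"
proof -
  let ?e = "cyclic_embed m N"
  define G where "G a = (\<Sum>\<beta><W. if (s + \<beta>) mod N = j then T a (\<beta> * m + \<gamma>) else 0)" for a
  have "(\<Sum>a<m*W. \<Sum>b<m*W. if ?e s a = i * m + \<rho> \<and> ?e s b = j * m + \<gamma> then T a b else 0) =
      (\<Sum>a<m*W. if ?e s a = i * m + \<rho> then G a else 0)"
  proof (intro sum.cong refl)
    fix a
    show "(\<Sum>b<m*W. if ?e s a = i * m + \<rho> \<and> ?e s b = j * m + \<gamma> then T a b else 0) =
        (if ?e s a = i * m + \<rho> then G a else 0)"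
      unfolding G_def by (cases "?e s a = i * m + \<rho>") (simp_all add: sum_cyclic_embed_eq[OF assms(2)])
  qed
  also have "\<dots> = (\<Sum>\<alpha><W. if (s + \<alpha>) mod N = i then G (\<alpha> * m + \<rho>) else 0)"
    by (rule sum_cyclic_embed_eq[OF assms(1)])
  also have "\<dots> = (\<Sum>\<alpha><W. \<Sum>\<beta><W. if (s + \<alpha>) mod N = i \<and> (s + \<beta>) mod N = j
      then T (\<alpha> * m + \<rho>) (\<beta> * m + \<gamma>) else 0)"
  proof -
    have "(if c then \<Sum>\<beta><W. if d \<beta> then t \<beta> else 0 else 0) = (\<Sum>\<beta><W. if c \<and> d \<beta> then t \<beta> else (0::real))"
      for c d t by (cases c) simp_all
    then show ?thesis unfolding G_def by (simp only:)
  qed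
  finally show ?thesis .
qed

lemma circulant_average_block:
  assumes "i < N" "j < N" "\<rho> < m" "\<gamma> < m"
  shows "circulant_average m N W T (i * m + \<rho>) (j * m + \<gamma>) = (1 / real W) *
    (\<Sum>\<alpha><W. \<Sum>\<beta><W. if (int \<alpha> - int \<beta>) mod int N = (int i - int j) mod int N
      then T (\<alpha> * m + \<rho>) (\<beta> * m + \<gamma>) else 0)"
proof -
  have "circulant_average m N W T (i * m + \<rho>) (j * m + \<gamma>) = (1 / real W) *
      (\<Sum>s<N. \<Sum>\<alpha><W. \<Sum>\<beta><W. if (s + \<alpha>) mod N = i \<and> (s + \<beta>) mod N = j
        then T (\<alpha> * m + \<rho>) (\<beta> * m + \<gamma>) else 0)"
    unfolding circulant_average_def by (simp add: sum_cyclic_embed_pair_eq[OF assms(3,4)])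
  also have "(\<Sum>s<N. \<Sum>\<alpha><W. \<Sum>\<beta><W. if (s + \<alpha>) mod N = i \<and> (s + \<beta>) mod N = j
        then T (\<alpha> * m + \<rho>) (\<beta> * m + \<gamma>) else 0) =
      (\<Sum>\<alpha><W. \<Sum>\<beta><W. \<Sum>s<N. if (s + \<alpha>) mod N = i \<and> (s + \<beta>) mod N = j
        then T (\<alpha> * m + \<rho>) (\<beta> * m + \<gamma>) else 0)"
    by (simp only: sum.swap[of _ "{..<N}" "{..<W}"])
  finally show ?thesis by (simp only: sum_shift_pair_eq[OF assms(1,2)])
qed

lemma block_circulant_circulant_average: "block_circulant m N (circulant_average m N W T)"
  unfolding block_circulant_def by (simp add: circulant_average_block)

lemma mod_eq_mod_iff_eq:
  fixes u v N :: int
  assumes "\<bar>u - v\<bar> < N"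
  shows "u mod N = v mod N \<longleftrightarrow> u = v"
proof
  assume "u mod N = v mod N"
  then have "N dvd u - v" by (simp add: mod_eq_dvd_iff)
  then show "u = v" using dvd_imp_le_int[of "u - v" N] assms by fastforce
qed simp

lemma count_pairs_with_difference_nat:
  assumes "k \<le> W"
  shows "(\<Sum>\<alpha><W. \<Sum>\<beta><W. if \<alpha> = \<beta> + k then 1 else 0) = real W - real k"
proof -
  have "(\<Sum>\<alpha><W. \<Sum>\<beta><W. if \<alpha> = \<beta> + k then 1 else 0) = (\<Sum>\<beta><W. \<Sum>\<alpha><W. if \<alpha> = \<beta> + k then (1::real) else 0)"
    by (rule sum.swap)
  also have "\<dots> = real (card {\<beta>. \<beta> < W \<and> \<beta> + k < W})"
    by (simp add: sum.delta' sum.If_cases Int_def)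
  also have "{\<beta>. \<beta> < W \<and> \<beta> + k < W} = {..<W - k}" using assms by auto
  finally show ?thesis using assms by simp
qed

lemma count_pairs_with_difference:
  assumes "\<bar>d\<bar> < int W"
  shows "(\<Sum>\<alpha><W. \<Sum>\<beta><W. if int \<alpha> - int \<beta> = d then 1 else 0) = real W - real_of_int \<bar>d\<bar>"
proof (cases "0 \<le> d")
  case True
  have "(\<Sum>\<alpha><W. \<Sum>\<beta><W. if int \<alpha> - int \<beta> = d then 1 else 0) =
      (\<Sum>\<alpha><W. \<Sum>\<beta><W. if \<alpha> = \<beta> + nat d then 1 else (0::real))"
    using True by (intro sum.cong refl) auto
  also have "\<dots> = real W - real (nat d)" using assms by (intro count_pairs_with_difference_nat) auto
  finally show ?thesis using True by simp
next
  case False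
  have "(\<Sum>\<alpha><W. \<Sum>\<beta><W. if int \<alpha> - int \<beta> = d then 1 else 0) =
      (\<Sum>\<beta><W. \<Sum>\<alpha><W. if \<beta> = \<alpha> + nat (- d) then 1 else (0::real))"
    using False by (subst sum.swap, intro sum.cong refl) auto
  also have "\<dots> = real W - real (nat (- d))" using assms by (intro count_pairs_with_difference_nat) auto
  finally show ?thesis using False by simp
qed

text \<open>For \<open>N \<ge> 2W\<close> no wrap-around occurs among the leading \<open>W\<close> block rows, so the
  averaged matrix there is the block Toeplitz matrix with its \<open>k\<close>-th block diagonal damped by
  the number \<open>W - k\<close> of shifts containing it.\<close>

lemma circulant_average_block_toeplitz:
  assumes "2 * W \<le> N" "i < W" "j < W" "\<rho> < m" "\<gamma> < m"
  shows "circulant_average m N W (block_toeplitz m R) (i * m + \<rho>) (j * m + \<gamma>) =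
    (real W - real_of_int \<bar>int i - int j\<bar>) / real W * block_toeplitz m R (i * m + \<rho>) (j * m + \<gamma>)"
proof -
  let ?V = "block_toeplitz m R (i * m + \<rho>) (j * m + \<gamma>)"
  have "(if (int \<alpha> - int \<beta>) mod int N = (int i - int j) mod int N
      then block_toeplitz m R (\<alpha> * m + \<rho>) (\<beta> * m + \<gamma>) else 0) =
      ?V * (if int \<alpha> - int \<beta> = int i - int j then 1 else 0)" if "\<alpha> < W" "\<beta> < W" for \<alpha> \<beta>
  proof -
    have "(int \<alpha> - int \<beta>) mod int N = (int i - int j) mod int N \<longleftrightarrow> int \<alpha> - int \<beta> = int i - int j"
      using that assms(1-3) by (intro mod_eq_mod_iff_eq) auto
    then show ?thesis using block_toeplitz_block_diff_eq[OF assms(4,5), of \<alpha> \<beta> i j] by simp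
  qed
  then have "(\<Sum>\<alpha><W. \<Sum>\<beta><W. if (int \<alpha> - int \<beta>) mod int N = (int i - int j) mod int N
      then block_toeplitz m R (\<alpha> * m + \<rho>) (\<beta> * m + \<gamma>) else 0) =
      ?V * (\<Sum>\<alpha><W. \<Sum>\<beta><W. if int \<alpha> - int \<beta> = int i - int j then 1 else 0)"
    by (simp add: sum_distrib_left)
  also have "\<dots> = ?V * (real W - real_of_int \<bar>int i - int j\<bar>)"
    using assms(2,3) by (subst count_pairs_with_difference) auto
  finally show ?thesis
    using assms by (simp add: circulant_average_block)
qed

section \<open>Amplification and the main theorem\<close>

lemma block_toeplitz_scale:
  "block_toeplitz m (\<lambda>k r c. f k * Sig k r c) p q =
    f (nat \<bar>int (p div m) - int (q div m)\<bar>) * block_toeplitz m Sig p q"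
  unfolding block_toeplitz_def Let_def by (simp add: nat_diff_distrib)

text \<open>The amplification \<open>W / (W - k)\<close> of the \<open>k\<close>-th block undoes the damping of
  \<open>circulant_average_block_toeplitz\<close>.\<close>

definition amplify :: "nat \<Rightarrow> (nat \<Rightarrow> nat \<Rightarrow> nat \<Rightarrow> real) \<Rightarrow> nat \<Rightarrow> nat \<Rightarrow> nat \<Rightarrow> real" where
  "amplify W Sig k r c = real W / (real W - real k) * Sig k r c"

lemma eventually_pos_def_on_amplify:
  assumes "symmetric_on {..<d} (block_toeplitz m Sig)" "pos_def_on {..<d} (block_toeplitz m Sig)"
  shows "eventually (\<lambda>W. symmetric_on {..<d} (block_toeplitz m (amplify W Sig)) \<and>
    pos_def_on {..<d} (block_toeplitz m (amplify W Sig))) sequentially"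
proof -
  have scale: "block_toeplitz m (amplify W Sig) p q =
      real W / (real W - real (nat \<bar>int (p div m) - int (q div m)\<bar>)) * block_toeplitz m Sig p q" for W p q
    unfolding amplify_def[abs_def] by (rule block_toeplitz_scale)
  have sym: "symmetric_on {..<d} (block_toeplitz m (amplify W Sig))" for W
    using assms(1) unfolding symmetric_on_def scale by (simp add: abs_minus_commute)
  have lim: "((\<lambda>W. real W / (real W - real k)) \<longlongrightarrow> 1) sequentially" for k
  proof -
    have "((\<lambda>W. 1 / (1 - real k / real W)) \<longlongrightarrow> 1 / (1 - 0)) sequentially"
      by (intro tendsto_intros lim_const_over_n) simp
    moreover have "eventually (\<lambda>W. 1 / (1 - real k / real W) = real W / (real W - real k)) sequentially"
      using eventually_gt_at_top[of k] by eventually_elim (simp add: field_simps)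
    ultimately show ?thesis by (simp add: tendsto_cong)
  qed
  have "((\<lambda>W. block_toeplitz m (amplify W Sig) p q) \<longlongrightarrow> 1 * block_toeplitz m Sig p q) sequentially" for p q
    unfolding scale by (intro tendsto_mult_right lim)
  then have "eventually (\<lambda>W. pos_def_on {..<d} (block_toeplitz m (amplify W Sig))) sequentially"
    using sym assms by (intro eventually_pos_def_on) simp_all
  then show ?thesis using sym by simp
qed

lemma circulant_average_amplify_corner:
  assumes "m \<ge> 1" "2 * W \<le> N" "n < W" "\<forall>k\<le>n. R k = amplify W Sig k"
    and "p < m * (n + 1)" "q < m * (n + 1)"
  shows "circulant_average m N W (block_toeplitz m R) p q = block_toeplitz m Sig p q"
proof -
  obtain i r where p: "p = i * m + r" "i < n + 1" "r < m" using block_decompose[OF assms(1,5)] .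
  obtain j c where q: "q = j * m + c" "j < n + 1" "c < m" using block_decompose[OF assms(1,6)] .
  define d where "d = real_of_int \<bar>int i - int j\<bar>"
  have d: "real W - d \<noteq> 0" "real W \<noteq> 0" using p(2) q(2) assms(3) unfolding d_def by linarith+
  have "circulant_average m N W (block_toeplitz m R) p q = (real W - d) / real W * block_toeplitz m R p q"
    unfolding p(1) q(1) d_def using p(2,3) q(2,3) assms(2,3)
    by (intro circulant_average_block_toeplitz) auto
  also have "block_toeplitz m R p q = block_toeplitz m (amplify W Sig) p q"
    using assms(4) p q by (intro block_toeplitz_cong[of n]) auto
  also have "\<dots> = real W / (real W - d) * block_toeplitz m Sig p q"
    unfolding amplify_def[abs_def] block_toeplitz_scale d_def using p q by simp
  finally show ?thesis using d by simp
qed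

theorem theorem5:
  fixes m n :: nat and Sig :: "nat \<Rightarrow> nat \<Rightarrow> nat \<Rightarrow> real"
  assumes "m \<ge> 1" and "n \<ge> 1"
    and "sym_mat (m * (n + 1)) (block_toeplitz m Sig)"
    and "pos_def_mat (m * (n + 1)) (block_toeplitz m Sig)"
  shows "\<exists>Nbar. \<forall>N \<ge> Nbar. \<exists>S :: nat \<Rightarrow> nat \<Rightarrow> real.
           block_circulant m N S \<and> sym_mat (m * N) S \<and> pos_def_mat (m * N) S \<and>
           (\<forall>p < m * (n + 1). \<forall>q < m * (n + 1). S p q = block_toeplitz m Sig p q)"
proof -
  have "eventually (\<lambda>W. n < W \<and> symmetric_on {..<m*(n+1)} (block_toeplitz m (amplify W Sig)) \<and>
      pos_def_on {..<m*(n+1)} (block_toeplitz m (amplify W Sig))) sequentially"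
    using eventually_gt_at_top[of n] eventually_pos_def_on_amplify assms(3,4)
    unfolding sym_mat_iff_symmetric_on pos_def_mat_iff_pos_def_on by (auto intro: eventually_conj)
  then obtain W where W: "n < W" "symmetric_on {..<m*(n+1)} (block_toeplitz m (amplify W Sig))"
      "pos_def_on {..<m*(n+1)} (block_toeplitz m (amplify W Sig))"
    using eventually_sequentially by auto
  then obtain R where R: "\<forall>k\<le>n. R k = amplify W Sig k"
      "symmetric_on {..<m*W} (block_toeplitz m R)" "pos_def_on {..<m*W} (block_toeplitz m R)"
    using block_toeplitz_extend[OF assms(1) W(2,3), of "W - (n + 1)"] by auto
  have "block_circulant m N S \<and> sym_mat (m * N) S \<and> pos_def_mat (m * N) S \<and>
      (\<forall>p < m * (n + 1). \<forall>q < m * (n + 1). S p q = block_toeplitz m Sig p q)"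
    if "2 * W \<le> N" and S: "S = circulant_average m N W (block_toeplitz m R)" for N S
    unfolding S sym_mat_iff_symmetric_on pos_def_mat_iff_pos_def_on
    using that W(1) block_circulant_circulant_average symmetric_on_circulant_average[OF R(2)]
      pos_def_on_circulant_average[OF assms(1) _ _ R(3)] circulant_average_amplify_corner[OF assms(1) _ _ R(1)]
    by auto
  then show ?thesis by blast
qed

end
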